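(* Let $R$ be a unital $*$-ring, $p\in R$ a projection and $\phi:R\to pRp$ a unital $*$-ring isomorphism, and let $A=R[t_+,t_-,\phi]$ with its $\mathbb Z$-grading and involution. Then: (1) $R$ is proper if and only if $A$ is graded proper; (2) $R$ is positive definite if and only if $A$ is positive definite.
   Context: With $p_0=1$, $p_n=\phi^n(p_0)$, the corner skew Laurent polynomial ring $R[t_+,t_-,\phi]$ is the unital ring of formal expressions $t_-^m r_{-m}+\dots+t_-r_{-1}+r_0+r_1t_++\dots+r_nt_+^n$ with $r_{-i}\in p_iR$, $r_j\in Rp_j$, componentwise addition and multiplication determined by distributivity and $t_-t_+=1$, $t_+t_-=p$, $rt_-=t_-\phi(r)$, $t_+r=\phi(r)t_+$. It is $\mathbb Z$-graded with $A_0=R$, $A_n=Rp_nt_+^n$, $A_{-n}=t_-^np_nR$ ($n\ge1$), and has the involution extending that of $R$ additively by $(t_-^ir)^*=r^*t_+^i$, $(rt_+^i)^*=t_-^ir^*$. A projection is $p=p^2=p^*$. A $*$-ring is proper if $xx^*=0\Rightarrow x=0$, graded proper if this holds for homogeneous $x$, and positive definite if for all $n$ and $x_1,\dots,x_n$, $\sum_i x_ix_i^*=0$ implies all $x_i=0$. *)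

theory Defs
  imports Main
begin

definition star_ring :: "('a::ring_1 \<Rightarrow> 'a) \<Rightarrow> bool" where
  "star_ring s \<longleftrightarrow> (\<forall>x y. s (x + y) = s x + s y) \<and> (\<forall>x y. s (x * y) = s y * s x)
                    \<and> (\<forall>x. s (s x) = x)"

definition projection :: "('a::ring_1 \<Rightarrow> 'a) \<Rightarrow> 'a \<Rightarrow> bool" where
  "projection s p \<longleftrightarrow> p * p = p \<and> s p = p"

definition corner_iso :: "('a::ring_1 \<Rightarrow> 'a) \<Rightarrow> 'a \<Rightarrow> ('a \<Rightarrow> 'a) \<Rightarrow> bool" where
  "corner_iso s p \<phi> \<longleftrightarrow> (\<forall>x y. \<phi> (x + y) = \<phi> x + \<phi> y) \<and> (\<forall>x y. \<phi> (x * y) = \<phi> x * \<phi> y)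
      \<and> \<phi> 1 = p \<and> (\<forall>x. \<phi> (s x) = s (\<phi> x)) \<and> bij_betw \<phi> UNIV {p * x * p | x. True}"

definition proj_seq :: "('a::ring_1 \<Rightarrow> 'a) \<Rightarrow> nat \<Rightarrow> 'a" where
  "proj_seq \<phi> n = (\<phi> ^^ n) 1"

text \<open>An element t_-^m r_{-m} + ... + r_0 + ... + r_n t_+^n is represented by its
  coefficient function c :: int => R (c k = r_k), finitely supported, with
  r_{-i} in p_i R and r_j in R p_j.\<close>
definition cslp_carrier :: "('a::ring_1 \<Rightarrow> 'a) \<Rightarrow> (int \<Rightarrow> 'a) set" where
  "cslp_carrier \<phi> = {c. finite {k. c k \<noteq> 0}
      \<and> (\<forall>i::nat. 0 < i \<longrightarrow> c (- int i) = proj_seq \<phi> i * c (- int i))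
      \<and> (\<forall>j::nat. 0 < j \<longrightarrow> c (int j) = c (int j) * proj_seq \<phi> j)}"

text \<open>psi(x) = t_- x t_+ = phi^{-1}(p x p).\<close>
definition cslp_psi :: "'a::ring_1 \<Rightarrow> ('a \<Rightarrow> 'a) \<Rightarrow> 'a \<Rightarrow> 'a" where
  "cslp_psi p \<phi> x = inv_into UNIV \<phi> (p * x * p)"

text \<open>Coefficient of the product of the homogeneous element of degree i with
  coefficient a and the homogeneous element of degree j with coefficient b;
  the product is homogeneous of degree i + j.  This is the normal form obtained
  from distributivity and t_- t_+ = 1, t_+ t_- = p, r t_- = t_- phi(r),
  t_+ r = phi(r) t_+.\<close>
definition cslp_hmul :: "'a::ring_1 \<Rightarrow> ('a \<Rightarrow> 'a) \<Rightarrow> int \<Rightarrow> 'a \<Rightarrow> int \<Rightarrow> 'a \<Rightarrow> 'a" where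
  "cslp_hmul p \<phi> i a j b =
     (if 0 \<le> i \<and> 0 \<le> j then a * (\<phi> ^^ nat i) b
      else if i \<le> 0 \<and> j \<le> 0 then (\<phi> ^^ nat (- j)) a * b
      else if 0 < i \<and> j < 0 then
        (if nat (- j) \<le> nat i then a * (\<phi> ^^ (nat i - nat (- j))) b
         else (\<phi> ^^ (nat (- j) - nat i)) a * b)
      else
        (if nat j \<le> nat (- i) then proj_seq \<phi> (nat (- i) - nat j) * ((cslp_psi p \<phi>) ^^ nat j) (a * b)
         else ((cslp_psi p \<phi>) ^^ nat (- i)) (a * b) * proj_seq \<phi> (nat j - nat (- i))))"

definition cslp_mult :: "'a::ring_1 \<Rightarrow> ('a \<Rightarrow> 'a) \<Rightarrow> (int \<Rightarrow> 'a) \<Rightarrow> (int \<Rightarrow> 'a) \<Rightarrow> (int \<Rightarrow> 'a)" where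
  "cslp_mult p \<phi> c d = (\<lambda>k. \<Sum>i\<in>{i. c i \<noteq> 0}. cslp_hmul p \<phi> i (c i) (k - i) (d (k - i)))"

text \<open>Involution: (t_-^i r)^* = r^* t_+^i, (r t_+^i)^* = t_-^i r^*.\<close>
definition cslp_star :: "('a::ring_1 \<Rightarrow> 'a) \<Rightarrow> (int \<Rightarrow> 'a) \<Rightarrow> (int \<Rightarrow> 'a)" where
  "cslp_star s c = (\<lambda>k. s (c (- k)))"

definition cslp_homogeneous :: "(int \<Rightarrow> 'a::zero) \<Rightarrow> bool" where
  "cslp_homogeneous c \<longleftrightarrow> (\<exists>n. \<forall>k. k \<noteq> n \<longrightarrow> c k = 0)"

definition proper :: "('a::ring_1 \<Rightarrow> 'a) \<Rightarrow> bool" where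
  "proper s \<longleftrightarrow> (\<forall>x. x * s x = 0 \<longrightarrow> x = 0)"

definition positive_definite :: "('a::ring_1 \<Rightarrow> 'a) \<Rightarrow> bool" where
  "positive_definite s \<longleftrightarrow> (\<forall>xs. (\<Sum>x\<leftarrow>xs. x * s x) = 0 \<longrightarrow> (\<forall>x\<in>set xs. x = 0))"

definition cslp_graded_proper :: "('a::ring_1 \<Rightarrow> 'a) \<Rightarrow> 'a \<Rightarrow> ('a \<Rightarrow> 'a) \<Rightarrow> bool" where
  "cslp_graded_proper s p \<phi> \<longleftrightarrow>
     (\<forall>c\<in>cslp_carrier \<phi>. cslp_homogeneous c \<longrightarrow>
        cslp_mult p \<phi> c (cslp_star s c) = (\<lambda>_. 0) \<longrightarrow> c = (\<lambda>_. 0))"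

definition cslp_positive_definite :: "('a::ring_1 \<Rightarrow> 'a) \<Rightarrow> 'a \<Rightarrow> ('a \<Rightarrow> 'a) \<Rightarrow> bool" where
  "cslp_positive_definite s p \<phi> \<longleftrightarrow>
     (\<forall>xs. set xs \<subseteq> cslp_carrier \<phi> \<longrightarrow>
        (\<lambda>k. \<Sum>x\<leftarrow>xs. cslp_mult p \<phi> x (cslp_star s x) k) = (\<lambda>_. 0) \<longrightarrow>
        (\<forall>x\<in>set xs. x = (\<lambda>_. 0)))"

end

theory Submission
  imports Defs
begin

text \<open>Write \<open>\<psi>\<close> for \<open>x \<mapsto> t\<^sub>- x t\<^sub>+\<close>. The degree-0 coefficient of \<open>x x\<^sup>*\<close> is
  \<open>\<Sum>\<^sub>i t\<^sub>-\<^sup>m r\<^sub>i r\<^sub>i\<^sup>* t\<^sub>+\<^sup>m\<close> with \<open>m = max 0 (-i)\<close>, i.e. a sum of terms \<open>\<psi>\<^sup>m (r\<^sub>i r\<^sub>i\<^sup>*)\<close>.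
  Applying the injective \<open>*\<close>-endomorphism \<open>\<phi>\<^sup>M\<close> for \<open>M\<close> beyond every \<open>m\<close> turns each
  term into \<open>g\<^sub>i g\<^sub>i\<^sup>*\<close> with \<open>g\<^sub>i = \<phi>\<^sup>M\<^sup>-\<^sup>m (r\<^sub>i)\<close>, because the coefficient condition
  \<open>r\<^sub>i \<in> p\<^sub>m R\<close> makes \<open>\<phi>\<^sup>m\<close> a left inverse of \<open>\<psi>\<^sup>m\<close> there. So a (sum of) vanishing
  \<open>x x\<^sup>*\<close> in \<open>A\<close> yields a vanishing sum of \<open>g g\<^sup>*\<close> in \<open>R\<close>; conversely \<open>R\<close> sits in \<open>A\<close>
  as the degree-0 component.\<close>

locale corner_skew_laurent =
  fixes s :: "'a::ring_1 \<Rightarrow> 'a" and p :: 'a and \<phi> :: "'a \<Rightarrow> 'a"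
  assumes star_ring: "star_ring s" and projection: "projection s p"
    and corner_iso: "corner_iso s p \<phi>"
begin

lemma star_add: "s (x + y) = s x + s y"
  using star_ring unfolding star_ring_def by blast

lemma star_mult: "s (x * y) = s y * s x"
  using star_ring unfolding star_ring_def by blast

lemma star_star: "s (s x) = x"
  using star_ring unfolding star_ring_def by blast

lemma star_zero: "s 0 = 0"
  using star_add[of 0 0] by simp

lemma star_one: "s 1 = 1"
  by (metis mult_1_right star_mult star_star)

lemma phi_add: "\<phi> (x + y) = \<phi> x + \<phi> y"
  using corner_iso unfolding corner_iso_def by blast

lemma phi_mult: "\<phi> (x * y) = \<phi> x * \<phi> y"
  using corner_iso unfolding corner_iso_def by blast

lemma phi_star: "\<phi> (s x) = s (\<phi> x)"
  using corner_iso unfolding corner_iso_def by blast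

lemma phi_inj: "inj \<phi>"
  using corner_iso unfolding corner_iso_def bij_betw_def by blast

lemma range_phi: "range \<phi> = {p * x * p | x. True}"
  using corner_iso unfolding corner_iso_def bij_betw_def by blast

lemma phi_zero: "\<phi> 0 = 0"
  using phi_add[of 0 0] by simp

lemma proj_idem: "p * p = p"
  using projection unfolding projection_def by blast

lemma proj_mult_phi: "p * \<phi> x = \<phi> x" and phi_mult_proj: "\<phi> x * p = \<phi> x"
proof -
  have "\<phi> x \<in> range \<phi>" by simp
  then obtain y where y: "\<phi> x = p * y * p" using range_phi by auto
  show "p * \<phi> x = \<phi> x" unfolding y by (simp add: mult.assoc[symmetric] proj_idem)
  show "\<phi> x * p = \<phi> x" unfolding y by (simp add: mult.assoc proj_idem)
qed

lemma phi_cslp_psi: "\<phi> (cslp_psi p \<phi> w) = p * w * p"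
proof -
  have "p * w * p \<in> range \<phi>" using range_phi by auto
  thus ?thesis unfolding cslp_psi_def by (simp add: f_inv_into_f)
qed

lemma phi_pow_add: "(\<phi> ^^ n) (x + y) = (\<phi> ^^ n) x + (\<phi> ^^ n) y"
  by (induction n) (auto simp: phi_add)

lemma phi_pow_mult: "(\<phi> ^^ n) (x * y) = (\<phi> ^^ n) x * (\<phi> ^^ n) y"
  by (induction n) (auto simp: phi_mult)

lemma phi_pow_star: "(\<phi> ^^ n) (s x) = s ((\<phi> ^^ n) x)"
  by (induction n) (auto simp: phi_star)

lemma phi_pow_zero: "(\<phi> ^^ n) 0 = 0"
  by (induction n) (auto simp: phi_zero)

lemma phi_pow_inj: "inj (\<phi> ^^ n)"
  using phi_inj by simp

lemma phi_pow_sum: "(\<phi> ^^ n) (sum g A) = (\<Sum>i\<in>A. (\<phi> ^^ n) (g i))"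
  by (induction A rule: infinite_finite_induct) (auto simp: phi_pow_zero phi_pow_add)

lemma proj_seq_Suc: "proj_seq \<phi> (Suc m) = \<phi> (proj_seq \<phi> m)"
  by (simp add: proj_seq_def)

lemma star_proj_seq: "s (proj_seq \<phi> m) = proj_seq \<phi> m"
  unfolding proj_seq_def by (simp add: phi_pow_star[symmetric] star_one)

lemma phi_pow_cslp_psi_pow:
  "w = proj_seq \<phi> m * w * proj_seq \<phi> m \<Longrightarrow> (\<phi> ^^ m) ((cslp_psi p \<phi> ^^ m) w) = w"
proof (induction m arbitrary: w)
  case 0
  then show ?case by simp
next
  case (Suc m)
  define q where "q = proj_seq \<phi> m"
  have w: "w = \<phi> q * w * \<phi> q"
    using Suc.prems by (simp add: proj_seq_Suc q_def)
  then have "p * w = w" and "w * p = w"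
    by (metis mult.assoc proj_mult_phi, metis mult.assoc phi_mult_proj)
  then have phi_psi_w: "\<phi> (cslp_psi p \<phi> w) = w"
    by (simp add: phi_cslp_psi)
  then have "\<phi> (q * cslp_psi p \<phi> w * q) = \<phi> (cslp_psi p \<phi> w)"
    by (simp add: phi_mult w[symmetric])
  then have "cslp_psi p \<phi> w = q * cslp_psi p \<phi> w * q"
    using phi_inj by (simp add: inj_eq)
  then have "(\<phi> ^^ m) ((cslp_psi p \<phi> ^^ m) (cslp_psi p \<phi> w)) = cslp_psi p \<phi> w"
    using Suc.IH q_def by blast
  then show ?case
    unfolding funpow_Suc_right[of m "cslp_psi p \<phi>"] by (simp add: phi_psi_w)
qed

lemma cslp_carrier_coeff:
  assumes "c \<in> cslp_carrier \<phi>"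
  shows "c i = proj_seq \<phi> (nat (- i)) * c i"
proof (cases "0 \<le> i")
  case True
  then show ?thesis by (simp add: proj_seq_def)
next
  case False
  then have "i = - int (nat (- i))" and "0 < nat (- i)" by auto
  with assms show ?thesis unfolding cslp_carrier_def by (metis (mono_tags) mem_Collect_eq)
qed

lemma phi_pow_cslp_hmul_star:
  assumes r: "r = proj_seq \<phi> (nat (- i)) * r" and M: "nat (- i) \<le> M"
  shows "(\<phi> ^^ M) (cslp_hmul p \<phi> i r (- i) (s r))
       = (\<phi> ^^ (M - nat (- i))) r * s ((\<phi> ^^ (M - nat (- i))) r)"
proof (cases "0 \<le> i")
  case True
  then have "cslp_hmul p \<phi> i r (- i) (s r) = r * s r"
    unfolding cslp_hmul_def by auto
  with True show ?thesis by (simp add: phi_pow_mult phi_pow_star)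
next
  case False
  define m where "m = nat (- i)"
  define q where "q = proj_seq \<phi> m"
  have "cslp_hmul p \<phi> i r (- i) (s r) = (cslp_psi p \<phi> ^^ m) (r * s r)"
    using False unfolding cslp_hmul_def m_def by (simp add: proj_seq_def)
  moreover have "s r = s r * q"
    using r star_mult[of q r] star_proj_seq by (metis m_def q_def)
  then have "r * s r = q * (r * s r) * q"
    using r by (metis m_def q_def mult.assoc)
  then have "(\<phi> ^^ m) ((cslp_psi p \<phi> ^^ m) (r * s r)) = r * s r"
    using phi_pow_cslp_psi_pow q_def by blast
  moreover have "\<phi> ^^ M = (\<phi> ^^ (M - m)) \<circ> (\<phi> ^^ m)"
    using M m_def by (metis funpow_add le_add_diff_inverse2)
  ultimately show ?thesis
    by (simp add: m_def phi_pow_mult phi_pow_star)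
qed

lemma cslp_mult_star_coeff_zero:
  "cslp_mult p \<phi> c (cslp_star s c) 0
     = (\<Sum>i | c i \<noteq> 0. cslp_hmul p \<phi> i (c i) (- i) (s (c i)))"
  unfolding cslp_mult_def cslp_star_def by simp

lemma phi_pow_cslp_mult_star_coeff_zero:
  assumes c: "c \<in> cslp_carrier \<phi>" and M: "\<And>i. c i \<noteq> 0 \<Longrightarrow> nat (- i) \<le> M"
  shows "(\<phi> ^^ M) (cslp_mult p \<phi> c (cslp_star s c) 0)
       = (\<Sum>i | c i \<noteq> 0. (\<phi> ^^ (M - nat (- i))) (c i) * s ((\<phi> ^^ (M - nat (- i))) (c i)))"
  unfolding cslp_mult_star_coeff_zero phi_pow_sum
  using phi_pow_cslp_hmul_star[OF cslp_carrier_coeff[OF c] M] by simp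

lemma cslp_carrier_bounded:
  assumes "set xs \<subseteq> cslp_carrier \<phi>"
  obtains M where "\<And>x i. x \<in> set xs \<Longrightarrow> x i \<noteq> 0 \<Longrightarrow> nat (- i) \<le> M"
proof -
  have "finite {i. x i \<noteq> 0}" if "x \<in> set xs" for x
    using assms that unfolding cslp_carrier_def by blast
  then have "finite (\<Union>x\<in>set xs. (\<lambda>i. nat (- i)) ` {i. x i \<noteq> 0})" by blast
  then obtain M where "\<forall>n \<in> (\<Union>x\<in>set xs. (\<lambda>i. nat (- i)) ` {i. x i \<noteq> 0}). n \<le> M"
    using finite_nat_set_iff_bounded_le by blast
  then show ?thesis by (intro that) blast
qed

definition cslp_const :: "'a \<Rightarrow> int \<Rightarrow> 'a" where
  "cslp_const x = (\<lambda>k. if k = 0 then x else 0)"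

lemma cslp_const_carrier: "cslp_const x \<in> cslp_carrier \<phi>"
proof -
  have "finite {k. cslp_const x k \<noteq> 0}"
    by (rule finite_subset[of _ "{0}"]) (auto simp: cslp_const_def)
  then show ?thesis unfolding cslp_carrier_def cslp_const_def by auto
qed

lemma cslp_const_homogeneous: "cslp_homogeneous (cslp_const x)"
  unfolding cslp_homogeneous_def cslp_const_def by auto

lemma cslp_const_eq_zero_iff: "cslp_const x = (\<lambda>_. 0) \<longleftrightarrow> x = 0"
  unfolding cslp_const_def by (metis (mono_tags))

lemma cslp_mult_star_const:
  "cslp_mult p \<phi> (cslp_const x) (cslp_star s (cslp_const x)) k = (if k = 0 then x * s x else 0)"
proof (cases "x = 0")
  case True
  then show ?thesis unfolding cslp_mult_def cslp_const_def by (simp add: star_zero)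
next
  case False
  then have "{i. cslp_const x i \<noteq> 0} = {0}" unfolding cslp_const_def by auto
  then show ?thesis unfolding cslp_mult_def
    by (simp add: cslp_const_def cslp_star_def star_zero cslp_hmul_def phi_pow_zero)
qed

theorem proper_iff_cslp_graded_proper: "proper s \<longleftrightarrow> cslp_graded_proper s p \<phi>"
proof
  assume proper: "proper s"
  show "cslp_graded_proper s p \<phi>" unfolding cslp_graded_proper_def
  proof (intro ballI impI ext)
    fix c k assume c: "c \<in> cslp_carrier \<phi>" and "cslp_homogeneous c"
      and zero: "cslp_mult p \<phi> c (cslp_star s c) = (\<lambda>_. 0)"
    then obtain n where n: "\<And>k. k \<noteq> n \<Longrightarrow> c k = 0" unfolding cslp_homogeneous_def by blast
    have "c n = 0"
    proof (rule ccontr)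
      assume "c n \<noteq> 0"
      with n have "{i. c i \<noteq> 0} = {n}" by auto
      moreover have "\<And>i. c i \<noteq> 0 \<Longrightarrow> nat (- i) \<le> nat (- n)" using n by fastforce
      ultimately have "(\<phi> ^^ nat (- n)) (cslp_mult p \<phi> c (cslp_star s c) 0) = c n * s (c n)"
        using phi_pow_cslp_mult_star_coeff_zero[OF c, of "nat (- n)"] by simp
      with zero have "c n * s (c n) = 0" by (simp add: phi_pow_zero)
      with proper \<open>c n \<noteq> 0\<close> show False unfolding proper_def by blast
    qed
    with n show "c k = 0" by metis
  qed
next
  assume graded_proper: "cslp_graded_proper s p \<phi>"
  show "proper s" unfolding proper_def
  proof (intro allI impI)
    fix x assume "x * s x = 0"
    then have "cslp_mult p \<phi> (cslp_const x) (cslp_star s (cslp_const x)) = (\<lambda>_. 0)"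
      by (simp add: cslp_mult_star_const fun_eq_iff)
    with graded_proper show "x = 0"
      using cslp_const_carrier cslp_const_homogeneous cslp_const_eq_zero_iff
      unfolding cslp_graded_proper_def by blast
  qed
qed

lemma positive_definite_imp_cslp_positive_definite:
  assumes pd: "positive_definite s"
  shows "cslp_positive_definite s p \<phi>"
  unfolding cslp_positive_definite_def
proof (intro allI impI ballI ext)
  fix xs x i
  assume xs: "set xs \<subseteq> cslp_carrier \<phi>"
    and zero: "(\<lambda>k. \<Sum>x\<leftarrow>xs. cslp_mult p \<phi> x (cslp_star s x) k) = (\<lambda>_. 0)"
    and x: "x \<in> set xs"
  obtain M where M: "\<And>x i. x \<in> set xs \<Longrightarrow> x i \<noteq> 0 \<Longrightarrow> nat (- i) \<le> M"
    using cslp_carrier_bounded[OF xs] by blast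
  define g where "g x i = (\<phi> ^^ (M - nat (- i))) (x i)" for x :: "int \<Rightarrow> 'a" and i
  define gs where "gs x = map (g x) (sorted_list_of_set {i. x i \<noteq> 0})" for x
  have "(\<Sum>y\<leftarrow>gs x. y * s y) = (\<phi> ^^ M) (cslp_mult p \<phi> x (cslp_star s x) 0)"
    if "x \<in> set xs" for x
  proof -
    have "finite {i. x i \<noteq> 0}" using xs that unfolding cslp_carrier_def by blast
    then have "(\<Sum>y\<leftarrow>gs x. y * s y) = (\<Sum>i | x i \<noteq> 0. g x i * s (g x i))"
      by (simp add: gs_def o_def sum_list_distinct_conv_sum_set)
    also have "\<dots> = (\<phi> ^^ M) (cslp_mult p \<phi> x (cslp_star s x) 0)"
      using phi_pow_cslp_mult_star_coeff_zero[of x M] M that xs by (auto simp: g_def)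
    finally show ?thesis .
  qed
  then have "(\<Sum>y\<leftarrow>concat (map gs xs). y * s y)
      = (\<phi> ^^ M) (\<Sum>x\<leftarrow>xs. cslp_mult p \<phi> x (cslp_star s x) 0)"
    by (induction xs) (auto simp: phi_pow_add phi_pow_zero)
  also have "\<dots> = 0" using fun_cong[OF zero, of 0] by (simp add: phi_pow_zero)
  finally have gs_zero: "\<forall>y\<in>set (concat (map gs xs)). y = 0"
    using pd unfolding positive_definite_def by blast
  show "x i = 0"
  proof (rule ccontr)
    assume "x i \<noteq> 0"
    then have "finite {i. x i \<noteq> 0}" and "g x i \<in> set (gs x)"
      using xs x unfolding cslp_carrier_def gs_def by auto
    with gs_zero x have "(\<phi> ^^ (M - nat (- i))) (x i) = 0" by (auto simp: g_def)
    with \<open>x i \<noteq> 0\<close> show False by (metis phi_pow_inj phi_pow_zero injD)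
  qed
qed

lemma cslp_positive_definite_imp_positive_definite:
  assumes pd: "cslp_positive_definite s p \<phi>"
  shows "positive_definite s"
  unfolding positive_definite_def
proof (intro allI impI)
  fix xs :: "'a list" assume zero: "(\<Sum>x\<leftarrow>xs. x * s x) = 0"
  have "(\<lambda>k. \<Sum>y\<leftarrow>map cslp_const xs. cslp_mult p \<phi> y (cslp_star s y) k) = (\<lambda>_. 0)"
  proof
    fix k
    show "(\<Sum>y\<leftarrow>map cslp_const xs. cslp_mult p \<phi> y (cslp_star s y) k) = 0"
      using zero by (cases "k = 0") (simp_all add: cslp_mult_star_const o_def)
  qed
  moreover have "set (map cslp_const xs) \<subseteq> cslp_carrier \<phi>"
    using cslp_const_carrier by auto
  ultimately have "\<forall>y\<in>set (map cslp_const xs). y = (\<lambda>_. 0)"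
    using pd unfolding cslp_positive_definite_def by blast
  then show "\<forall>x\<in>set xs. x = 0" by (simp add: cslp_const_eq_zero_iff)
qed

end

theorem mainTheorem10:
  fixes s :: "'a::ring_1 \<Rightarrow> 'a" and p :: 'a and \<phi> :: "'a \<Rightarrow> 'a"
  assumes "star_ring s" and "projection s p" and "corner_iso s p \<phi>"
  shows "(proper s \<longleftrightarrow> cslp_graded_proper s p \<phi>)
       \<and> (positive_definite s \<longleftrightarrow> cslp_positive_definite s p \<phi>)"
proof -
  interpret corner_skew_laurent s p \<phi> using assms by unfold_locales
  show ?thesis
    using proper_iff_cslp_graded_proper positive_definite_imp_cslp_positive_definite
      cslp_positive_definite_imp_positive_definite by blast
qed

end
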